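(* $B(2)=1$, $B(3)=2$, $B(4)=4$, and $B(5)=6$.
   Context: Fix a field $\mathbb{F}$. All algebras are finite-dimensional, unital, not necessarily associative $\mathbb{F}$-algebras. For a finite generating set $S$ of an algebra $\mathcal{A}$, a word in $S$ is any product (with any bracketing) of finitely many elements of $S$; its length is the number of factors, and $1$ is a word of length $0$. $L_i(S)$ is the linear span of all words in $S$ of length at most $i$. The length of $S$ is $l(S)=\min\{k\ge0: L_k(S)=\mathcal{A}\}$, and $l(\mathcal{A})=\max\{l(S): S\text{ a finite generating set of }\mathcal{A}\}$. For a natural number $n\ge2$, $B(n)$ denotes the maximal integer $l>0$ such that for every $j\in\{1,\ldots,l\}$ there exists an algebra of dimension $n$ and length $j$. *)

theory Defs
  imports Main
begin

text \<open>An n-dimensional algebra over a field 'a is represented (up to isomorphism)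
on the coordinate space F^n = functions nat => 'a vanishing at indices >= n,
with bilinear multiplication given by structure constants c i j k.\<close>

definition carrier :: "nat \<Rightarrow> (nat \<Rightarrow> 'a::field) set" where
  "carrier n = {v. \<forall>i\<ge>n. v i = 0}"

definition amult :: "nat \<Rightarrow> (nat \<Rightarrow> nat \<Rightarrow> nat \<Rightarrow> 'a::field)
                    \<Rightarrow> (nat \<Rightarrow> 'a) \<Rightarrow> (nat \<Rightarrow> 'a) \<Rightarrow> (nat \<Rightarrow> 'a)" where
  "amult n c x y = (\<lambda>k. if k < n then (\<Sum>i<n. \<Sum>j<n. x i * y j * c i j k) else 0)"

definition is_unital_alg :: "nat \<Rightarrow> (nat \<Rightarrow> nat \<Rightarrow> nat \<Rightarrow> 'a::field) \<Rightarrow> (nat \<Rightarrow> 'a) \<Rightarrow> bool" where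
  "is_unital_alg n c u \<longleftrightarrow> u \<in> carrier n \<and>
     (\<forall>x\<in>carrier n. amult n c u x = x \<and> amult n c x u = x)"

inductive is_word :: "nat \<Rightarrow> (nat \<Rightarrow> nat \<Rightarrow> nat \<Rightarrow> 'a::field) \<Rightarrow> (nat \<Rightarrow> 'a)
                      \<Rightarrow> (nat \<Rightarrow> 'a) set \<Rightarrow> nat \<Rightarrow> (nat \<Rightarrow> 'a) \<Rightarrow> bool"
  for n c u S where
  word_one: "is_word n c u S 0 u"
| word_gen: "s \<in> S \<Longrightarrow> is_word n c u S 1 s"
| word_mult: "is_word n c u S i a \<Longrightarrow> is_word n c u S j b \<Longrightarrow> 1 \<le> i \<Longrightarrow> 1 \<le> j
               \<Longrightarrow> is_word n c u S (i + j) (amult n c a b)"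

definition lspan :: "(nat \<Rightarrow> 'a::field) set \<Rightarrow> (nat \<Rightarrow> 'a) set" where
  "lspan W = {(\<lambda>k. \<Sum>w\<in>T. f w * w k) | T f. finite T \<and> T \<subseteq> W}"

definition Lk :: "nat \<Rightarrow> (nat \<Rightarrow> nat \<Rightarrow> nat \<Rightarrow> 'a::field) \<Rightarrow> (nat \<Rightarrow> 'a)
                  \<Rightarrow> (nat \<Rightarrow> 'a) set \<Rightarrow> nat \<Rightarrow> (nat \<Rightarrow> 'a) set" where
  "Lk n c u S k = lspan {w. \<exists>i\<le>k. is_word n c u S i w}"

definition generates :: "nat \<Rightarrow> (nat \<Rightarrow> nat \<Rightarrow> nat \<Rightarrow> 'a::field) \<Rightarrow> (nat \<Rightarrow> 'a)
                  \<Rightarrow> (nat \<Rightarrow> 'a) set \<Rightarrow> bool" where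
  "generates n c u S \<longleftrightarrow> finite S \<and> S \<subseteq> carrier n \<and> (\<exists>k. Lk n c u S k = carrier n)"

definition gen_length :: "nat \<Rightarrow> (nat \<Rightarrow> nat \<Rightarrow> nat \<Rightarrow> 'a::field) \<Rightarrow> (nat \<Rightarrow> 'a)
                  \<Rightarrow> (nat \<Rightarrow> 'a) set \<Rightarrow> nat" where
  "gen_length n c u S = (LEAST k. Lk n c u S k = carrier n)"

definition alg_length :: "nat \<Rightarrow> (nat \<Rightarrow> nat \<Rightarrow> nat \<Rightarrow> 'a::field) \<Rightarrow> (nat \<Rightarrow> 'a) \<Rightarrow> nat \<Rightarrow> bool" where
  "alg_length n c u l \<longleftrightarrow>
     (\<exists>S. generates n c u S \<and> gen_length n c u S = l) \<and>
     (\<forall>S. generates n c u S \<longrightarrow> gen_length n c u S \<le> l)"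

definition B :: "'a::field itself \<Rightarrow> nat \<Rightarrow> nat" where
  "B (_::'a itself) n = (GREATEST l. 0 < l \<and>
     (\<forall>j\<in>{1..l}. \<exists>(c::nat \<Rightarrow> nat \<Rightarrow> nat \<Rightarrow> 'a) u. is_unital_alg n c u \<and> alg_length n c u j))"

end

theory Submission
  imports Defs "HOL-Library.Function_Algebras" HOL.Vector_Spaces
begin

text \<open>
  Call \<open>k \<ge> 1\<close> a jump of a generating set \<open>S\<close> if \<open>L\<^sub>k\<^sub>-\<^sub>1(S) \<noteq> L\<^sub>k(S)\<close>. The jumps give a
  strictly increasing chain of subspaces starting at the line \<open>L\<^sub>0(S)\<close>, so there are fewer than \<open>n\<close>
  of them; the length \<open>l(S)\<close> is a jump; and every jump \<open>m \<ge> 2\<close> is the sum of two jumps, since a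
  word of length \<open>m\<close> outside \<open>L\<^sub>m\<^sub>-\<^sub>1(S)\<close> is a product of words of lengths \<open>a + b = m\<close>, and
  \<open>L\<^sub>a(S) = L\<^sub>a\<^sub>-\<^sub>1(S)\<close> would put that product into \<open>L\<^sub>m\<^sub>-\<^sub>1(S)\<close>. A set of positive integers
  with this closure property containing 2, 3, 5 or 7 has at least 2, 3, 4 or 5 elements, which
  rules out the lengths 2, 3, 5, 7 in dimensions 2, 3, 4, 5.

  Conversely, give the basis vectors \<open>e\<^sub>0 = 1, e\<^sub>1, \<dots>, e\<^sub>n\<^sub>-\<^sub>1\<close> weights (\<open>e\<^sub>0\<close> weight 0, the others
  positive), declare each \<open>e\<^sub>k\<close> of weight at least 2 to be a product \<open>e\<^sub>i e\<^sub>j\<close> with weights adding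
  up, and let all other products of non-unit basis vectors vanish. The weight-one vectors generate
  with length equal to the maximal weight \<open>M\<close>, and no generating set does worse: modulo
  \<open>L\<^sub>k\<^sub>-\<^sub>1(S)\<close> a word of length \<open>k\<close> lies in the span of the basis vectors of weight at least \<open>k\<close>,
  which is zero for \<open>k > M\<close>. Suitable weights give every length below the dimension, length 4 in
  dimension 4, and lengths 5 and 6 in dimension 5.
\<close>

definition scale_fun :: "'a::field \<Rightarrow> (nat \<Rightarrow> 'a) \<Rightarrow> nat \<Rightarrow> 'a" where
  "scale_fun a f = (\<lambda>k. a * f k)"

interpretation fun_vs: vector_space "scale_fun :: 'a::field \<Rightarrow> _"
  by unfold_locales (auto simp: scale_fun_def algebra_simps fun_eq_iff)

lemma sum_fun_apply: "(\<Sum>a\<in>A. f a) k = (\<Sum>a\<in>A. f a k)"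
  by (induction A rule: infinite_finite_induct) auto

lemma lspan_eq_span: "lspan W = fun_vs.span W"
  unfolding lspan_def fun_vs.span_explicit
  by (auto simp: scale_fun_def sum_fun_apply fun_eq_iff)

definition basis_vec :: "nat \<Rightarrow> nat \<Rightarrow> 'a::field" where
  "basis_vec i = (\<lambda>k. if k = i then 1 else 0)"

lemma sum_basis_vec_mult:
  assumes "a < n" shows "(\<Sum>i<n. basis_vec a i * f i) = (f a :: 'a::field)"
proof -
  have "(\<Sum>i<n. basis_vec a i * f i) = (\<Sum>i<n. if i = a then f i else 0)"
    by (rule sum.cong) (auto simp: basis_vec_def)
  then show ?thesis using assms by simp
qed

lemma basis_vec_in_carrier: "i < n \<Longrightarrow> basis_vec i \<in> carrier n"
  by (simp add: basis_vec_def carrier_def)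

lemma subspace_carrier: "fun_vs.subspace (carrier n :: (nat \<Rightarrow> 'a::field) set)"
  unfolding fun_vs.subspace_def carrier_def by (auto simp: scale_fun_def)

lemma subspace_coordinate_zero: "fun_vs.subspace {v :: nat \<Rightarrow> 'a::field. v t = 0}"
  unfolding fun_vs.subspace_def by (auto simp: scale_fun_def)

lemma sum_mult_basis_vec_apply:
  assumes "k < n" shows "(\<Sum>i<n. x i * basis_vec i k) = (x k :: 'a::field)"
proof -
  have "(\<Sum>i<n. x i * basis_vec i k) = (\<Sum>i<n. if i = k then x i else 0)"
    by (rule sum.cong) (auto simp: basis_vec_def)
  then show ?thesis using assms by simp
qed

lemma carrier_subset_span_basis:
  "carrier n \<subseteq> fun_vs.span (basis_vec ` {..<n} :: (nat \<Rightarrow> 'a::field) set)"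
proof
  fix v :: "nat \<Rightarrow> 'a" assume v: "v \<in> carrier n"
  have "v k = (\<Sum>i<n. v i * basis_vec i k)" for k
    using v sum_mult_basis_vec_apply[of k n v]
    by (cases "k < n") (auto simp: carrier_def basis_vec_def)
  then have "v = (\<Sum>i<n. scale_fun (v i) (basis_vec i))"
    unfolding fun_eq_iff sum_fun_apply scale_fun_def by blast
  also have "\<dots> \<in> fun_vs.span (basis_vec ` {..<n})"
    by (intro fun_vs.span_sum fun_vs.span_scale fun_vs.span_base) auto
  finally show "v \<in> fun_vs.span (basis_vec ` {..<n})" .
qed

lemma amult_in_carrier: "amult n c x y \<in> carrier n"
  by (simp add: amult_def carrier_def)

lemma amult_add_left: "amult n c (x + y) z = amult n c x z + amult n c y z"
  by (auto simp: amult_def fun_eq_iff algebra_simps sum.distrib)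

lemma amult_add_right: "amult n c z (x + y) = amult n c z x + amult n c z y"
  by (auto simp: amult_def fun_eq_iff algebra_simps sum.distrib)

lemma amult_scale_left: "amult n c (scale_fun a x) z = scale_fun a (amult n c x z)"
  by (auto simp: amult_def fun_eq_iff scale_fun_def sum_distrib_left mult.assoc)

lemma amult_scale_right: "amult n c z (scale_fun a x) = scale_fun a (amult n c z x)"
  by (auto simp: amult_def fun_eq_iff scale_fun_def sum_distrib_left algebra_simps)

lemma amult_zero_left: "amult n c 0 z = 0"
  by (auto simp: amult_def fun_eq_iff)

lemma amult_zero_right: "amult n c z 0 = 0"
  by (auto simp: amult_def fun_eq_iff)

lemma amult_span_subset:
  assumes V: "fun_vs.subspace V" and gens: "\<And>a b. a \<in> X \<Longrightarrow> b \<in> Y \<Longrightarrow> amult n c a b \<in> V"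
    and x: "x \<in> fun_vs.span X" and y: "y \<in> fun_vs.span Y"
  shows "amult n c x y \<in> V"
proof -
  have right: "amult n c a y \<in> V" if "a \<in> X" for a
    using y
  proof (induction rule: fun_vs.span_induct_alt)
    case base
    show ?case unfolding amult_zero_right by (rule fun_vs.subspace_0[OF V])
  next
    case (step d b z)
    have "amult n c a (scale_fun d b + z) = scale_fun d (amult n c a b) + amult n c a z"
      by (simp only: amult_add_right amult_scale_right)
    then show ?case
      using step gens[OF \<open>a \<in> X\<close>] fun_vs.subspace_add[OF V] fun_vs.subspace_scale[OF V]
      by metis
  qed
  show ?thesis
    using x
  proof (induction rule: fun_vs.span_induct_alt)
    case base
    show ?case unfolding amult_zero_left by (rule fun_vs.subspace_0[OF V])
  next
    case (step d a z)
    have "amult n c (scale_fun d a + z) y = scale_fun d (amult n c a y) + amult n c z y"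
      by (simp only: amult_add_left amult_scale_left)
    then show ?case
      using step right fun_vs.subspace_add[OF V] fun_vs.subspace_scale[OF V]
      by metis
  qed
qed

lemma amult_basis_vec_left:
  "a < n \<Longrightarrow> k < n \<Longrightarrow> amult n c (basis_vec a) y k = (\<Sum>j<n. y j * c a j k)"
  by (simp add: amult_def mult.assoc flip: sum_distrib_left) (simp add: sum_basis_vec_mult)

lemma amult_basis_vec_right:
  "b < n \<Longrightarrow> k < n \<Longrightarrow> amult n c x (basis_vec b) k = (\<Sum>i<n. x i * c i b k)"
  by (simp add: amult_def mult.assoc sum_basis_vec_mult flip: sum_distrib_left)

lemma amult_eq_0_if_terms_vanish:
  "(\<And>i j. i < n \<Longrightarrow> j < n \<Longrightarrow> x i * y j * c i j k = 0) \<Longrightarrow> amult n c x y k = 0"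
  by (auto simp: amult_def intro!: sum.neutral)

lemma unit_neq_0:
  assumes "is_unital_alg n c (u :: nat \<Rightarrow> 'a::field)" "0 < n"
  shows "u \<noteq> 0"
proof
  assume "u = 0"
  then have "basis_vec 0 = (0 :: nat \<Rightarrow> 'a)"
    using assms basis_vec_in_carrier[OF \<open>0 < n\<close>]
    by (metis amult_zero_left is_unital_alg_def)
  then show False by (metis basis_vec_def zero_fun_def one_neq_zero)
qed

lemma is_word_in_carrier:
  "is_word n c u S i w \<Longrightarrow> S \<subseteq> carrier n \<Longrightarrow> u \<in> carrier n \<Longrightarrow> w \<in> carrier n"
  by (induction rule: is_word.induct) (auto simp: amult_in_carrier)

lemma is_word_0_eq: "is_word n c u S 0 w \<Longrightarrow> w = u"
  by (cases rule: is_word.cases) auto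

lemma Lk_eq_span: "Lk n c u S k = fun_vs.span {w. \<exists>i\<le>k. is_word n c u S i w}"
  by (simp add: Lk_def lspan_eq_span)

lemma subspace_Lk: "fun_vs.subspace (Lk n c u S k)"
  by (simp add: Lk_eq_span)

lemma is_word_in_Lk: "is_word n c u S i w \<Longrightarrow> i \<le> k \<Longrightarrow> w \<in> Lk n c u S k"
  unfolding Lk_eq_span by (rule fun_vs.span_base) auto

lemma Lk_subsetI:
  assumes "fun_vs.subspace V" and "\<And>i w. i \<le> k \<Longrightarrow> is_word n c u S i w \<Longrightarrow> w \<in> V"
  shows "Lk n c u S k \<subseteq> V"
  unfolding Lk_eq_span using assms by (intro fun_vs.span_minimal) auto

lemma Lk_mono: "k \<le> k' \<Longrightarrow> Lk n c u S k \<subseteq> Lk n c u S k'"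
  by (rule Lk_subsetI[OF subspace_Lk]) (auto intro: is_word_in_Lk)

lemma Lk_subset_carrier: "S \<subseteq> carrier n \<Longrightarrow> u \<in> carrier n \<Longrightarrow> Lk n c u S k \<subseteq> carrier n"
  by (rule Lk_subsetI[OF subspace_carrier]) (simp add: is_word_in_carrier)

lemma amult_Lk:
  assumes U: "is_unital_alg n c u" and S: "S \<subseteq> carrier n"
    and v: "v \<in> Lk n c u S i" and w: "w \<in> Lk n c u S j"
  shows "amult n c v w \<in> Lk n c u S (i + j)"
proof (rule amult_span_subset[OF subspace_Lk _ v[unfolded Lk_eq_span] w[unfolded Lk_eq_span]])
  have u: "u \<in> carrier n" using U by (simp add: is_unital_alg_def)
  fix a b assume "a \<in> {w. \<exists>i'\<le>i. is_word n c u S i' w}" "b \<in> {w. \<exists>j'\<le>j. is_word n c u S j' w}"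
  then obtain i' j' where a: "i' \<le> i" "is_word n c u S i' a" and b: "j' \<le> j" "is_word n c u S j' b"
    by auto
  consider "i' = 0" | "j' = 0" | "1 \<le> i'" "1 \<le> j'" by linarith
  then show "amult n c a b \<in> Lk n c u S (i + j)"
  proof cases
    case 1
    with a have "a = u" by (blast dest: is_word_0_eq)
    then have "amult n c a b = b"
      using U is_word_in_carrier[OF b(2) S u] by (simp add: is_unital_alg_def)
    then show ?thesis using b by (simp add: is_word_in_Lk)
  next
    case 2
    with b have "b = u" by (blast dest: is_word_0_eq)
    then have "amult n c a b = a"
      using U is_word_in_carrier[OF a(2) S u] by (simp add: is_unital_alg_def)
    then show ?thesis using a by (simp add: is_word_in_Lk)
  next
    case 3
    with a b have "is_word n c u S (i' + j') (amult n c a b)"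
      by (intro is_word.word_mult)
    then show ?thesis using a b by (auto intro: is_word_in_Lk)
  qed
qed

section \<open>Jumps of the length filtration\<close>

lemma (in vector_space) independent_card_gt_steps:
  assumes subspace: "\<And>k. subspace (V k)" and mono: "\<And>k. V k \<subseteq> V (Suc k)"
    and bounded: "\<And>k. V k \<subseteq> span W" and W: "finite W" and nontrivial: "V 0 \<noteq> {0}"
  shows "\<exists>X. independent X \<and> X \<subseteq> V m \<and> V m \<subseteq> span X
    \<and> card {k\<in>{1..m}. V (k - 1) \<noteq> V k} < card X"
proof (induction m)
  have indep_finite: "finite X" if "independent X" "X \<subseteq> V k" for X k
    using independent_span_bound[OF W that(1) subset_trans[OF that(2) bounded]] by blast
  {
    case 0
    obtain x where "x \<in> V 0" "x \<noteq> 0"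
      using nontrivial subspace_0[OF subspace] by blast
    then obtain X where X: "x \<in> X" "X \<subseteq> V 0" "independent X" "V 0 \<subseteq> span X"
      using maximal_independent_subset_extend[of "{x}" "V 0"] by auto
    then have "card X > 0" using indep_finite[OF X(3,2)] by (auto simp: card_gt_0_iff)
    then show ?case using X by auto
  next
    case (Suc m)
    let ?steps = "\<lambda>m. {k\<in>{1..m}. V (k - 1) \<noteq> V k}"
    obtain X where X: "independent X" "X \<subseteq> V m" "V m \<subseteq> span X" "card (?steps m) < card X"
      using Suc.IH by blast
    obtain Y where Y: "X \<subseteq> Y" "Y \<subseteq> V (Suc m)" "independent Y" "V (Suc m) \<subseteq> span Y"
      using maximal_independent_subset_extend[of X "V (Suc m)"] X(1,2) mono[of m] by blast
    show ?case
    proof (cases "V m = V (Suc m)")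
      case True
      then have "?steps (Suc m) = ?steps m" by (auto simp: le_Suc_eq)
      then show ?thesis using X True by auto
    next
      case False
      have "X \<noteq> Y"
      proof
        assume "X = Y"
        then have "V (Suc m) \<subseteq> V m" using Y(4) span_minimal[OF X(2) subspace] by blast
        then show False using False mono[of m] by blast
      qed
      then have "card X < card Y"
        using Y(1) indep_finite[OF Y(3,2)] by (simp add: psubset_card_mono psubsetI)
      moreover have "?steps (Suc m) = insert (Suc m) (?steps m)"
        using False by (auto simp: le_Suc_eq)
      ultimately show ?thesis
        using X(4) Y(2-4) by (intro exI[of _ Y]) (simp add: card_insert_if)
    qed
  }
qed

lemma (in vector_space) card_strict_steps_less:
  assumes "\<And>k. subspace (V k)" and "\<And>k. V k \<subseteq> V (Suc k)"
    and bounded: "\<And>k. V k \<subseteq> span W" and W: "finite W" and "V 0 \<noteq> {0}"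
  shows "card {k\<in>{1..m}. V (k - 1) \<noteq> V k} < card W"
proof -
  obtain X where "independent X" "X \<subseteq> V m" "card {k\<in>{1..m}. V (k - 1) \<noteq> V k} < card X"
    using independent_card_gt_steps[OF assms] by blast
  moreover have "card X \<le> card W"
    using independent_span_bound[OF W] calculation(1,2) bounded by blast
  ultimately show ?thesis by linarith
qed

definition jumps :: "nat \<Rightarrow> (nat \<Rightarrow> nat \<Rightarrow> nat \<Rightarrow> 'a::field) \<Rightarrow> (nat \<Rightarrow> 'a)
                    \<Rightarrow> (nat \<Rightarrow> 'a) set \<Rightarrow> nat \<Rightarrow> nat set" where
  "jumps n c u S l = {k\<in>{1..l}. Lk n c u S (k - 1) \<noteq> Lk n c u S k}"

lemma card_jumps_less_dim:
  assumes U: "is_unital_alg n c (u :: nat \<Rightarrow> 'a::field)" and S: "S \<subseteq> carrier n" and "0 < n"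
  shows "card (jumps n c u S l) < n"
proof -
  let ?W = "basis_vec ` {..<n} :: (nat \<Rightarrow> 'a) set"
  have u: "u \<in> carrier n" using U by (simp add: is_unital_alg_def)
  have "card (jumps n c u S l) < card ?W"
    unfolding jumps_def
  proof (rule fun_vs.card_strict_steps_less)
    show "Lk n c u S k \<subseteq> fun_vs.span ?W" for k
      using Lk_subset_carrier[OF S u] carrier_subset_span_basis by blast
    show "Lk n c u S 0 \<noteq> {0}"
      using unit_neq_0[OF U \<open>0 < n\<close>] is_word_in_Lk[OF is_word.word_one, of 0] by blast
  qed (simp_all add: subspace_Lk Lk_mono)
  also have "card ?W \<le> n"
    using card_image_le[of "{..<n}" basis_vec] by simp
  finally show ?thesis .
qed

lemma gen_length_in_jumps:
  assumes "generates n c u S" and "1 \<le> gen_length n c u S"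
  shows "gen_length n c u S \<in> jumps n c u S (gen_length n c u S)"
proof -
  let ?l = "gen_length n c u S"
  obtain k where "Lk n c u S k = carrier n" using assms(1) by (auto simp: generates_def)
  then have "Lk n c u S ?l = carrier n"
    unfolding gen_length_def by (rule LeastI)
  moreover have "Lk n c u S (?l - 1) \<noteq> carrier n"
  proof
    assume "Lk n c u S (?l - 1) = carrier n"
    then have "?l \<le> ?l - 1" unfolding gen_length_def by (rule Least_le)
    then show False using assms(2) by simp
  qed
  ultimately show ?thesis using assms(2) by (auto simp: jumps_def)
qed

lemma jumps_of_new_product:
  assumes U: "is_unital_alg n c u" and S: "S \<subseteq> carrier n"
    and v: "v \<in> Lk n c u S i" and w: "w \<in> Lk n c u S j"
    and new: "amult n c v w \<notin> Lk n c u S (i + j - 1)"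
  shows "1 \<le> i \<Longrightarrow> Lk n c u S (i - 1) \<noteq> Lk n c u S i"
    and "1 \<le> j \<Longrightarrow> Lk n c u S (j - 1) \<noteq> Lk n c u S j"
proof -
  show "Lk n c u S (i - 1) \<noteq> Lk n c u S i" if "1 \<le> i"
  proof
    assume "Lk n c u S (i - 1) = Lk n c u S i"
    then have "amult n c v w \<in> Lk n c u S (i - 1 + j)" using amult_Lk[OF U S _ w] v by simp
    with new that show False by simp
  qed
  show "Lk n c u S (j - 1) \<noteq> Lk n c u S j" if "1 \<le> j"
  proof
    assume "Lk n c u S (j - 1) = Lk n c u S j"
    then have "amult n c v w \<in> Lk n c u S (i + (j - 1))" using amult_Lk[OF U S v] w by simp
    with new that show False by simp
  qed
qed

lemma jump_sum_of_jumps: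
  assumes U: "is_unital_alg n c u" and S: "S \<subseteq> carrier n"
    and m: "m \<in> jumps n c u S l" "2 \<le> m"
  shows "\<exists>a\<in>jumps n c u S l. \<exists>b\<in>jumps n c u S l. a + b = m"
proof -
  have "Lk n c u S (m - 1) \<subseteq> Lk n c u S m" by (rule Lk_mono) simp
  then have "\<not> Lk n c u S m \<subseteq> Lk n c u S (m - 1)" using m(1) by (auto simp: jumps_def)
  then obtain i w where w: "i \<le> m" "is_word n c u S i w" "w \<notin> Lk n c u S (m - 1)"
    using Lk_subsetI[OF subspace_Lk, of m n c u S] by blast
  then have "i = m"
    using is_word_in_Lk[of n c u S i w "m - 1"] by linarith
  with w m(2) obtain a b w1 w2 where
    factors: "is_word n c u S a w1" "is_word n c u S b w2" "1 \<le> a" "1 \<le> b" "a + b = m"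
      and "w = amult n c w1 w2"
    by (auto elim: is_word.cases)
  then have "Lk n c u S (a - 1) \<noteq> Lk n c u S a" "Lk n c u S (b - 1) \<noteq> Lk n c u S b"
    using jumps_of_new_product[OF U S is_word_in_Lk[OF factors(1)] is_word_in_Lk[OF factors(2)]] w(3)
    by auto
  moreover have "m \<le> l" using m(1) by (simp add: jumps_def)
  ultimately have "a \<in> jumps n c u S l" "b \<in> jumps n c u S l"
    using factors by (simp_all add: jumps_def)
  then show ?thesis using factors(5) by blast
qed

section \<open>Addition sets and excluded lengths\<close>

definition addition_set :: "nat set \<Rightarrow> bool" where
  "addition_set J \<longleftrightarrow> (\<forall>m\<in>J. 0 < m \<and> (2 \<le> m \<longrightarrow> (\<exists>a\<in>J. \<exists>b\<in>J. a + b = m)))"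

lemma addition_setD:
  assumes "addition_set J" "m \<in> J"
  shows "0 < m" and "2 \<le> m \<Longrightarrow> \<exists>a\<in>J. \<exists>b\<in>J. a + b = m"
  using assms by (simp_all add: addition_set_def)

lemma addition_set_one_two:
  assumes J: "addition_set J" shows "m \<in> J \<Longrightarrow> 2 \<le> m \<Longrightarrow> 1 \<in> J \<and> 2 \<in> J"
proof (induction m rule: less_induct)
  case (less m)
  then obtain a b where ab: "a \<in> J" "b \<in> J" "a + b = m"
    using addition_setD(2)[OF J] by blast
  moreover have "0 < a" "0 < b" using addition_setD(1)[OF J] ab by auto
  ultimately consider "2 \<le> a" "a < m" | "2 \<le> b" "b < m" | "a = 1" "b = 1" by linarith
  then show ?case
    using less ab by cases (auto simp: numeral_2_eq_2)
qed

lemma addition_set_large_summand: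
  assumes J: "addition_set J" and m: "m \<in> J" "2 \<le> m"
  obtains b where "b \<in> J" "m - b \<in> J" "m \<le> 2 * b" "b < m"
proof -
  obtain a b where ab: "a \<in> J" "b \<in> J" "a + b = m"
    using addition_setD(2)[OF J m] by blast
  moreover have "0 < a" "0 < b" using addition_setD(1)[OF J] ab by auto
  ultimately show ?thesis
    using that[of a] that[of b] by (cases "a \<le> b") auto
qed

lemma addition_set_mem_between:
  assumes J: "addition_set J" and m: "m \<in> J" "5 \<le> m"
  obtains x where "x \<in> J" "3 \<le> x" "x < m"
proof -
  obtain b where "b \<in> J" "m \<le> 2 * b" "b < m"
    using addition_set_large_summand[OF J m(1)] m(2) by auto
  moreover have "3 \<le> b" using calculation(2) m(2) by linarith
  ultimately show ?thesis using that by blast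
qed

lemma card_addition_set_ge:
  assumes J: "addition_set J" "finite J"
  shows "2 \<in> J \<Longrightarrow> 2 \<le> card J" and "3 \<in> J \<Longrightarrow> 3 \<le> card J"
    and "5 \<in> J \<Longrightarrow> 4 \<le> card J" and "7 \<in> J \<Longrightarrow> 5 \<le> card J"
proof -
  note one_two = addition_set_one_two[OF J(1)]
  note card_sub = card_mono[OF J(2)]
  show "2 \<le> card J" if two: "2 \<in> J"
    using card_sub[of "{1, 2}"] one_two[OF two] by simp
  show "3 \<le> card J" if three: "3 \<in> J"
    using card_sub[of "{1, 2, 3}"] one_two[OF three] three by simp
  show "4 \<le> card J" if five: "5 \<in> J"
  proof -
    obtain x where "x \<in> J" "3 \<le> x" "x < 5"
      using addition_set_mem_between[OF J(1) five] by auto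
    then show ?thesis
      using card_sub[of "{1, 2, x, 5}"] one_two[OF five] five by auto
  qed
  show "5 \<le> card J" if seven: "7 \<in> J"
  proof -
    obtain b where b: "b \<in> J" "7 - b \<in> J" "7 \<le> 2 * b" "b < 7"
      using addition_set_large_summand[OF J(1) seven] by auto
    obtain x y where "x \<in> J" "y \<in> J" "3 \<le> x" "x < y" "y < 7"
    proof (cases "b = 4")
      case True
      then show ?thesis using that[of 3 4] b by simp
    next
      case False
      then have "5 \<le> b" using b by linarith
      then show ?thesis using addition_set_mem_between[OF J(1) b(1)] that[of _ b] b by blast
    qed
    then show ?thesis
      using card_sub[of "{1, 2, x, y, 7}"] one_two[OF seven] seven by auto
  qed
qed

lemma addition_set_jumps:
  assumes "is_unital_alg n c u" and "S \<subseteq> carrier n"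
  shows "addition_set (jumps n c u S l)"
  unfolding addition_set_def
proof (intro ballI conjI impI)
  fix m assume m: "m \<in> jumps n c u S l"
  then show "0 < m" by (simp add: jumps_def)
  show "2 \<le> m \<Longrightarrow> \<exists>a\<in>jumps n c u S l. \<exists>b\<in>jumps n c u S l. a + b = m"
    by (rule jump_sum_of_jumps[OF assms m])
qed

definition realizable :: "'a::field itself \<Rightarrow> nat \<Rightarrow> nat \<Rightarrow> bool" where
  "realizable T n l \<longleftrightarrow> (\<exists>(c :: nat \<Rightarrow> nat \<Rightarrow> nat \<Rightarrow> 'a) u. is_unital_alg n c u \<and> alg_length n c u l)"

lemma realizable_addition_set:
  assumes "realizable TYPE('a::field) n l" and "0 < n" and "1 \<le> l"
  obtains J where "finite J" "addition_set J" "l \<in> J" "card J < n"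
proof -
  obtain c :: "nat \<Rightarrow> nat \<Rightarrow> nat \<Rightarrow> 'a" and u S
    where U: "is_unital_alg n c u" and G: "generates n c u S" and l: "gen_length n c u S = l"
    using assms(1) by (auto simp: realizable_def alg_length_def)
  have S: "S \<subseteq> carrier n" using G by (simp add: generates_def)
  show ?thesis
  proof (rule that)
    show "finite (jumps n c u S l)" by (simp add: jumps_def)
    show "addition_set (jumps n c u S l)" by (rule addition_set_jumps[OF U S])
    show "l \<in> jumps n c u S l" using gen_length_in_jumps[OF G] l assms(3) by simp
    show "card (jumps n c u S l) < n" by (rule card_jumps_less_dim[OF U S assms(2)])
  qed
qed

lemma not_realizable:
  "\<not> realizable TYPE('a::field) 2 2" "\<not> realizable TYPE('a) 3 3"
  "\<not> realizable TYPE('a) 4 5" "\<not> realizable TYPE('a) 5 7"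
  by (metis realizable_addition_set card_addition_set_ge not_less
        zero_less_numeral one_le_numeral)+

section \<open>Graded monomial algebras\<close>

text \<open>Structure constants on the basis \<open>e\<^sub>i = basis_vec i\<close>: \<open>e\<^sub>0\<close> is the unit, \<open>e\<^sub>p\<^sub>k e\<^sub>q\<^sub>k = e\<^sub>k\<close> for
  every \<open>k\<close> of weight at least 2, and all other products of non-unit basis vectors vanish.\<close>

definition monomial_constants ::
    "nat \<Rightarrow> (nat \<Rightarrow> nat) \<Rightarrow> (nat \<Rightarrow> nat) \<Rightarrow> (nat \<Rightarrow> nat) \<Rightarrow> nat \<Rightarrow> nat \<Rightarrow> nat \<Rightarrow> 'a::field" where
  "monomial_constants n wt p q i j k =
     (if i = 0 then basis_vec j k else if j = 0 then basis_vec i k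
      else of_bool (0 < k \<and> k < n \<and> 2 \<le> wt k \<and> p k = i \<and> q k = j))"

locale graded_monomial_algebra =
  fixes n :: nat and wt p q :: "nat \<Rightarrow> nat" and M :: nat
  assumes wt_0: "wt 0 = 0"
    and wt_bounds: "\<And>i. 0 < i \<Longrightarrow> i < n \<Longrightarrow> 1 \<le> wt i \<and> wt i \<le> M"
    and factors: "\<And>k. 0 < k \<Longrightarrow> k < n \<Longrightarrow> 2 \<le> wt k \<Longrightarrow>
       0 < p k \<and> p k < n \<and> 0 < q k \<and> q k < n \<and> wt (p k) + wt (q k) = wt k"
    and factors_inj: "\<And>k k'. 0 < k \<Longrightarrow> k < n \<Longrightarrow> 2 \<le> wt k \<Longrightarrow> 0 < k' \<Longrightarrow> k' < n \<Longrightarrow> 2 \<le> wt k'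
       \<Longrightarrow> p k = p k' \<Longrightarrow> q k = q k' \<Longrightarrow> k = k'"
    and max_attained: "\<exists>t. 0 < t \<and> t < n \<and> wt t = M"
begin

abbreviation mult :: "(nat \<Rightarrow> 'a::field) \<Rightarrow> (nat \<Rightarrow> 'a) \<Rightarrow> nat \<Rightarrow> 'a" where
  "mult \<equiv> amult n (monomial_constants n wt p q)"

abbreviation word :: "(nat \<Rightarrow> 'a::field) set \<Rightarrow> nat \<Rightarrow> (nat \<Rightarrow> 'a) \<Rightarrow> bool" where
  "word \<equiv> is_word n (monomial_constants n wt p q) (basis_vec 0)"

abbreviation L :: "(nat \<Rightarrow> 'a::field) set \<Rightarrow> nat \<Rightarrow> (nat \<Rightarrow> 'a) set" where
  "L \<equiv> Lk n (monomial_constants n wt p q) (basis_vec 0)"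

lemma n_pos: "0 < n"
  using max_attained by auto

lemma unital: "is_unital_alg n (monomial_constants n wt p q) (basis_vec 0 :: nat \<Rightarrow> 'a::field)"
  unfolding is_unital_alg_def
proof (intro conjI ballI)
  show "basis_vec 0 \<in> carrier n" by (rule basis_vec_in_carrier[OF n_pos])
  fix x :: "nat \<Rightarrow> 'a" assume x: "x \<in> carrier n"
  have c_unit: "monomial_constants n wt p q 0 j k = basis_vec j k"
    "monomial_constants n wt p q j 0 k = basis_vec j k" for j k
    by (simp_all add: monomial_constants_def basis_vec_def)
  have "mult (basis_vec 0) x k = x k" for k
  proof (cases "k < n")
    case True
    then show ?thesis
      by (simp add: amult_basis_vec_left[OF n_pos] c_unit sum_mult_basis_vec_apply)
  qed (use x in \<open>simp add: amult_def carrier_def\<close>)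
  then show "mult (basis_vec 0) x = x" ..
  have "mult x (basis_vec 0) k = x k" for k
  proof (cases "k < n")
    case True
    then show ?thesis
      by (simp add: amult_basis_vec_right[OF n_pos] c_unit sum_mult_basis_vec_apply)
  qed (use x in \<open>simp add: amult_def carrier_def\<close>)
  then show "mult x (basis_vec 0) = x" ..
qed

definition weight_ge :: "nat \<Rightarrow> (nat \<Rightarrow> 'a::field) set" where
  "weight_ge a = {v \<in> carrier n. \<forall>i<n. wt i < a \<longrightarrow> v i = 0}"

lemma monomial_constants_eq_0:
  assumes "i < n" "j < n" "k < n" "wt i + wt j \<noteq> wt k" "1 \<le> wt i" "1 \<le> wt j"
  shows "monomial_constants n wt p q i j k = 0"
proof -
  have "i \<noteq> 0" "j \<noteq> 0" using assms(5,6) wt_0 by (metis not_one_le_zero)+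
  moreover have "\<not> (0 < k \<and> k < n \<and> 2 \<le> wt k \<and> p k = i \<and> q k = j)"
    using factors[of k] assms(4) by auto
  ultimately show ?thesis by (simp add: monomial_constants_def)
qed

lemma amult_weight_ge:
  fixes x y :: "nat \<Rightarrow> 'a::field"
  assumes "1 \<le> a" "1 \<le> b" and x: "x \<in> weight_ge a" and y: "y \<in> weight_ge b"
  shows "mult x y \<in> weight_ge (a + b)"
  unfolding weight_ge_def
proof (intro CollectI conjI allI impI amult_in_carrier)
  fix k assume k: "k < n" "wt k < a + b"
  show "mult x y k = 0"
  proof (rule amult_eq_0_if_terms_vanish)
    fix i j assume "i < n" "j < n"
    then consider "x i = 0" | "y j = 0" | "a \<le> wt i" "b \<le> wt j"
      using x y by (force simp: weight_ge_def)
    then show "x i * y j * monomial_constants n wt p q i j k = 0"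
    proof cases
      case 3
      then show ?thesis
        using \<open>i < n\<close> \<open>j < n\<close> k assms(1,2) monomial_constants_eq_0[of i j k, where 'a='a] by simp
    qed simp_all
  qed
qed

lemma weight_ge_above_max:
  assumes "M < a" and v: "v \<in> weight_ge a"
  shows "v = 0"
proof
  fix k
  have "wt k < a" if "k < n"
    using wt_bounds[of k] wt_0 assms(1) that by (cases "k = 0") auto
  then show "v k = 0 k" using v by (cases "k < n") (auto simp: weight_ge_def carrier_def)
qed

lemma generator_decomp:
  fixes s :: "nat \<Rightarrow> 'a::field"
  assumes "s \<in> carrier n"
  shows "\<exists>a b. a \<in> L S 0 \<and> b \<in> weight_ge 1 \<and> s = a + b"
proof -
  let ?a = "scale_fun (s 0) (basis_vec 0) :: nat \<Rightarrow> 'a"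
  have "?a \<in> L S 0"
    by (intro fun_vs.subspace_scale[OF subspace_Lk] is_word_in_Lk[OF is_word.word_one]) simp
  moreover have "s - ?a \<in> weight_ge 1"
  proof -
    have "s - ?a \<in> carrier n"
      using assms basis_vec_in_carrier[OF n_pos] subspace_carrier
      by (blast intro: fun_vs.subspace_diff fun_vs.subspace_scale)
    moreover have "i = 0" if "i < n" "wt i < 1" for i
      using wt_bounds[of i] that by (cases "i = 0") auto
    ultimately show ?thesis by (auto simp: weight_ge_def scale_fun_def basis_vec_def)
  qed
  ultimately show ?thesis by force
qed

lemma amult_decomp:
  fixes S :: "(nat \<Rightarrow> 'a::field) set"
  assumes S: "S \<subseteq> carrier n" and ij: "1 \<le> i" "1 \<le> j"
    and w1: "w1 \<in> L S i" "a1 \<in> L S (i - 1)" "b1 \<in> weight_ge i" "w1 = a1 + b1"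
    and w2: "w2 \<in> L S j" "a2 \<in> L S (j - 1)" "b2 \<in> weight_ge j" "w2 = a2 + b2"
  shows "\<exists>a b. a \<in> L S (i + j - 1) \<and> b \<in> weight_ge (i + j) \<and> mult w1 w2 = a + b"
proof -
  have "L S (i - 1) \<subseteq> L S i" by (rule Lk_mono) simp
  then have "b1 \<in> L S i"
    using w1 fun_vs.subspace_diff[OF subspace_Lk, of w1 n _ _ S i a1] by auto
  then have "mult b1 a2 \<in> L S (i + j - 1)"
    using amult_Lk[OF unital S _ w2(2)] ij by (metis add_diff_assoc)
  moreover have "mult a1 w2 \<in> L S (i + j - 1)"
    using amult_Lk[OF unital S w1(2) w2(1)] ij by simp
  ultimately have "mult a1 w2 + mult b1 a2 \<in> L S (i + j - 1)"
    using fun_vs.subspace_add[OF subspace_Lk] by blast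
  moreover have "mult b1 b2 \<in> weight_ge (i + j)"
    using amult_weight_ge[OF ij w1(3) w2(3)] .
  moreover have "mult w1 w2 = (mult a1 w2 + mult b1 a2) + mult b1 b2"
    unfolding w1(4) w2(4) amult_add_left amult_add_right by (simp add: add.assoc)
  ultimately show ?thesis by blast
qed

lemma is_word_decomp:
  fixes S :: "(nat \<Rightarrow> 'a::field) set"
  assumes S: "S \<subseteq> carrier n"
  shows "word S k w \<Longrightarrow> 1 \<le> k \<Longrightarrow> \<exists>a b. a \<in> L S (k - 1) \<and> b \<in> weight_ge k \<and> w = a + b"
proof (induction rule: is_word.induct)
  case (word_gen s)
  then have "s \<in> carrier n" using S by blast
  then show ?case using generator_decomp[of s S] by (simp only: diff_self_eq_0)
next
  case (word_mult i w1 j w2)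
  obtain a1 b1 where "a1 \<in> L S (i - 1)" "b1 \<in> weight_ge i" "w1 = a1 + b1"
    using word_mult.IH(1) word_mult.hyps(3) by blast
  moreover obtain a2 b2 where "a2 \<in> L S (j - 1)" "b2 \<in> weight_ge j" "w2 = a2 + b2"
    using word_mult.IH(2) word_mult.hyps(4) by blast
  moreover have "w1 \<in> L S i" "w2 \<in> L S j"
    using is_word_in_Lk word_mult.hyps(1,2) by blast+
  ultimately show ?case
    using amult_decomp[OF S word_mult.hyps(3,4)] by blast
qed simp

lemma Lk_stable_above_max:
  fixes S :: "(nat \<Rightarrow> 'a::field) set"
  assumes S: "S \<subseteq> carrier n"
  shows "M \<le> k \<Longrightarrow> L S k = L S M"
proof (induction k rule: dec_induct)
  case (step k)
  have "L S (Suc k) \<subseteq> L S k"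
  proof (rule Lk_subsetI[OF subspace_Lk])
    fix i w assume i: "i \<le> Suc k" and w: "word S i w"
    show "w \<in> L S k"
    proof (cases "i \<le> k")
      case True
      then show ?thesis using is_word_in_Lk[OF w] by simp
    next
      case False
      then obtain a b where "a \<in> L S k" "b \<in> weight_ge (Suc k)" "w = a + b"
        using is_word_decomp[OF S w] i by (auto simp: le_Suc_eq)
      then show ?thesis using weight_ge_above_max[of "Suc k" b] step.hyps by simp
    qed
  qed
  moreover have "L S k \<subseteq> L S (Suc k)" by (rule Lk_mono) simp
  ultimately show ?case using step.IH by blast
qed simp

lemma gen_length_le_max:
  assumes "generates n (monomial_constants n wt p q) (basis_vec 0 :: nat \<Rightarrow> 'a::field) S"
  shows "gen_length n (monomial_constants n wt p q) (basis_vec 0) S \<le> M"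
proof -
  have S: "S \<subseteq> carrier n" using assms by (simp add: generates_def)
  obtain k where "L S k = carrier n" using assms by (auto simp: generates_def)
  moreover have "L S k \<subseteq> L S (max k M)" by (rule Lk_mono) simp
  ultimately have "carrier n \<subseteq> L S M"
    using Lk_stable_above_max[OF S, of "max k M"] by simp
  then have "L S M = carrier n"
    using Lk_subset_carrier[OF S basis_vec_in_carrier[OF n_pos]] by blast
  then show ?thesis unfolding gen_length_def by (rule Least_le)
qed

definition weight_one_gens :: "(nat \<Rightarrow> 'a::field) set" where
  "weight_one_gens = basis_vec ` {i. 0 < i \<and> i < n \<and> wt i = 1}"

lemma amult_factors:
  assumes k: "0 < k" "k < n" "2 \<le> wt k"
  shows "mult (basis_vec (p k)) (basis_vec (q k)) = (basis_vec k :: nat \<Rightarrow> 'a::field)"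
proof
  fix k'
  have pq: "0 < p k" "p k < n" "0 < q k" "q k < n" using factors[OF k] by auto
  show "mult (basis_vec (p k)) (basis_vec (q k)) k' = (basis_vec k :: nat \<Rightarrow> 'a) k'"
  proof (cases "k' < n")
    case True
    have "mult (basis_vec (p k)) (basis_vec (q k)) k'
        = (\<Sum>j<n. basis_vec (q k) j * (monomial_constants n wt p q (p k) j k' :: 'a))"
      using True pq by (simp add: amult_basis_vec_left mult.commute)
    also have "\<dots> = monomial_constants n wt p q (p k) (q k) k'"
      using pq by (simp add: sum_basis_vec_mult)
    also have "\<dots> = basis_vec k k'"
      using pq k True factors_inj[of k k'] by (auto simp: monomial_constants_def basis_vec_def)
    finally show ?thesis .
  next
    case False
    then show ?thesis using k by (simp add: amult_def basis_vec_def)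
  qed
qed

lemma basis_vec_is_word:
  "i < n \<Longrightarrow> word weight_one_gens (wt i) (basis_vec i :: nat \<Rightarrow> 'a::field)"
proof (induction "wt i" arbitrary: i rule: less_induct)
  case less
  consider "i = 0" | "0 < i" "wt i = 1" | "0 < i" "2 \<le> wt i"
    using wt_bounds[of i] less.prems by linarith
  then show ?case
  proof cases
    case 1
    then show ?thesis using wt_0 is_word.word_one by simp
  next
    case 2
    then have "basis_vec i \<in> (weight_one_gens :: (nat \<Rightarrow> 'a) set)"
      using less.prems by (auto simp: weight_one_gens_def)
    then have "word weight_one_gens 1 (basis_vec i :: nat \<Rightarrow> 'a)"
      by (rule is_word.word_gen)
    then show ?thesis using 2 by simp
  next
    case 3
    then have pq: "p i < n" "q i < n" "1 \<le> wt (p i)" "1 \<le> wt (q i)" "wt (p i) + wt (q i) = wt i"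
      using factors[of i] wt_bounds less.prems by auto
    then have "word weight_one_gens (wt (p i) + wt (q i))
        (mult (basis_vec (p i)) (basis_vec (q i)) :: nat \<Rightarrow> 'a)"
      using less.hyps by (intro is_word.word_mult) auto
    moreover have "mult (basis_vec (p i)) (basis_vec (q i)) = (basis_vec i :: nat \<Rightarrow> 'a)"
      using 3 less.prems by (intro amult_factors)
    ultimately show ?thesis using pq(5) by simp
  qed
qed

lemma is_word_weight_one_gens_homogeneous:
  "word weight_one_gens k (w :: nat \<Rightarrow> 'a::field) \<Longrightarrow> i < n \<Longrightarrow> wt i \<noteq> k \<Longrightarrow> w i = 0"
proof (induction arbitrary: i rule: is_word.induct)
  case (word_one i)
  then show ?case using wt_0 by (cases i) (auto simp: basis_vec_def)
next
  case word_gen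
  then show ?case by (auto simp: weight_one_gens_def basis_vec_def)
next
  case (word_mult a x b y)
  show ?case
  proof (rule amult_eq_0_if_terms_vanish)
    fix i' j' assume "i' < n" "j' < n"
    then consider "x i' = 0" | "y j' = 0" | "wt i' = a" "wt j' = b"
      using word_mult.IH by blast
    then show "x i' * y j' * monomial_constants n wt p q i' j' i = 0"
    proof cases
      case 3
      then show ?thesis
        using \<open>i' < n\<close> \<open>j' < n\<close> word_mult monomial_constants_eq_0[of i' j' i, where 'a='a]
        by simp
    qed simp_all
  qed
qed

lemma gen_length_weight_one_gens:
  "generates n (monomial_constants n wt p q) (basis_vec 0) (weight_one_gens :: (nat \<Rightarrow> 'a::field) set)
   \<and> gen_length n (monomial_constants n wt p q) (basis_vec 0) (weight_one_gens :: (nat \<Rightarrow> 'a) set) = M"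
proof -
  let ?G = "weight_one_gens :: (nat \<Rightarrow> 'a) set"
  have gens: "?G \<subseteq> carrier n" "finite ?G"
    by (auto simp: weight_one_gens_def basis_vec_in_carrier)
  have "basis_vec i \<in> L ?G M" if "i < n" for i
  proof -
    have "wt i \<le> M" using wt_bounds[of i] wt_0 that by (cases "i = 0") auto
    then show ?thesis using is_word_in_Lk[OF basis_vec_is_word[OF that, where 'a='a]] by simp
  qed
  then have "fun_vs.span (basis_vec ` {..<n}) \<subseteq> L ?G M"
    by (intro fun_vs.span_minimal[OF _ subspace_Lk]) auto
  then have full: "L ?G M = carrier n"
    using carrier_subset_span_basis[where 'a='a] Lk_subset_carrier[OF gens(1) basis_vec_in_carrier[OF n_pos]]
    by blast
  obtain t where t: "0 < t" "t < n" "wt t = M" using max_attained by blast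
  have short: "L ?G k \<noteq> carrier n" if "k < M" for k
  proof
    assume "L ?G k = carrier n"
    moreover have "L ?G k \<subseteq> {v. v t = 0}"
    proof (rule Lk_subsetI[OF subspace_coordinate_zero])
      fix i and w :: "nat \<Rightarrow> 'a" assume "i \<le> k" and w: "word weight_one_gens i w"
      then show "w \<in> {v. v t = 0}"
        using is_word_weight_one_gens_homogeneous[OF w t(2)] t(3) that by simp
    qed
    ultimately show False
      using basis_vec_in_carrier[OF t(2), where 'a='a] by (auto simp: basis_vec_def)
  qed
  have "gen_length n (monomial_constants n wt p q) (basis_vec 0) ?G = M"
    unfolding gen_length_def
  proof (rule Least_equality)
    show "L ?G M = carrier n" by (rule full)
    show "M \<le> k" if "L ?G k = carrier n" for k
      using short that not_le by blast
  qed
  then show ?thesis using gens full by (auto simp: generates_def)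
qed

lemma realizable_max_weight: "realizable TYPE('a::field) n M"
  unfolding realizable_def alg_length_def
  using unital gen_length_le_max gen_length_weight_one_gens by blast

end

text \<open>For \<open>i \<le> j\<close> the basis vector \<open>e\<^sub>i\<close> is the power \<open>x\<^sup>i = x \<cdot> x\<^sup>i\<^sup>-\<^sup>1\<close> of \<open>x = e\<^sub>1\<close>; the remaining
  basis vectors have weight 1.\<close>

lemma realizable_below_dim:
  assumes "1 \<le> j" "j < n"
  shows "realizable TYPE('a::field) n j"
proof -
  have "graded_monomial_algebra n (\<lambda>i. if i \<le> j then i else 1) (\<lambda>_. 1) (\<lambda>k. k - 1) j"
    using assms by unfold_locales (auto split: if_splits intro: exI[of _ j])
  then show ?thesis by (rule graded_monomial_algebra.realizable_max_weight)
qed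

text \<open>The weights \<open>0, 1, 2, 4\<close> with \<open>e\<^sub>2 = e\<^sub>1 e\<^sub>1\<close> and \<open>e\<^sub>3 = e\<^sub>2 e\<^sub>2\<close>; in dimension 5 the weights
  \<open>0, 1, 2, 3, 5\<close> and \<open>0, 1, 2, 3, 6\<close> with \<open>e\<^sub>3 = e\<^sub>2 e\<^sub>1\<close> and \<open>e\<^sub>4 = e\<^sub>3 e\<^sub>2\<close> resp. \<open>e\<^sub>4 = e\<^sub>3 e\<^sub>3\<close>.\<close>

lemma realizable_4_4: "realizable TYPE('a::field) 4 4"
proof -
  have "graded_monomial_algebra 4 (\<lambda>i. [0, 1, 2, 4] ! i) (\<lambda>i. [0, 0, 1, 2] ! i) (\<lambda>i. [0, 0, 1, 2] ! i) 4"
  proof unfold_locales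
    show "\<exists>t. 0 < t \<and> t < 4 \<and> [0, 1, 2, 4] ! t = 4" by (intro exI[of _ 3]) simp
  qed (auto simp: less_Suc_eq numeral_eq_Suc)
  then show ?thesis by (rule graded_monomial_algebra.realizable_max_weight)
qed

lemma realizable_5_5: "realizable TYPE('a::field) 5 5"
proof -
  have "graded_monomial_algebra 5
      (\<lambda>i. [0, 1, 2, 3, 5] ! i) (\<lambda>i. [0, 0, 1, 2, 3] ! i) (\<lambda>i. [0, 0, 1, 1, 2] ! i) 5"
  proof unfold_locales
    show "\<exists>t. 0 < t \<and> t < 5 \<and> [0, 1, 2, 3, 5] ! t = 5" by (intro exI[of _ 4]) simp
  qed (auto simp: less_Suc_eq numeral_eq_Suc)
  then show ?thesis by (rule graded_monomial_algebra.realizable_max_weight)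
qed

lemma realizable_5_6: "realizable TYPE('a::field) 5 6"
proof -
  have "graded_monomial_algebra 5
      (\<lambda>i. [0, 1, 2, 3, 6] ! i) (\<lambda>i. [0, 0, 1, 2, 3] ! i) (\<lambda>i. [0, 0, 1, 1, 3] ! i) 6"
  proof unfold_locales
    show "\<exists>t. 0 < t \<and> t < 5 \<and> [0, 1, 2, 3, 6] ! t = 6" by (intro exI[of _ 4]) simp
  qed (auto simp: less_Suc_eq numeral_eq_Suc)
  then show ?thesis by (rule graded_monomial_algebra.realizable_max_weight)
qed

lemma B_eqI:
  assumes "\<And>j. n \<le> j \<Longrightarrow> j \<le> b \<Longrightarrow> realizable TYPE('a::field) n j"
    and "\<not> realizable TYPE('a) n (Suc b)" and "0 < b"
  shows "B TYPE('a) n = b"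
  unfolding B_def
proof (rule Greatest_equality)
  have "realizable TYPE('a) n j" if "j \<in> {1..b}" for j
    using assms(1) realizable_below_dim that by (cases "j < n") auto
  then show "0 < b \<and> (\<forall>j\<in>{1..b}. \<exists>(c :: nat \<Rightarrow> nat \<Rightarrow> nat \<Rightarrow> 'a) u.
      is_unital_alg n c u \<and> alg_length n c u j)"
    using assms(3) by (simp add: realizable_def)
next
  fix y
  assume y: "0 < y \<and> (\<forall>j\<in>{1..y}. \<exists>(c :: nat \<Rightarrow> nat \<Rightarrow> nat \<Rightarrow> 'a) u.
      is_unital_alg n c u \<and> alg_length n c u j)"
  show "y \<le> b"
  proof (rule ccontr)
    assume "\<not> y \<le> b"
    then have "Suc b \<in> {1..y}" by simp
    with y have "realizable TYPE('a) n (Suc b)" unfolding realizable_def by blast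
    with assms(2) show False by contradiction
  qed
qed

theorem proposition4p9:
  shows "B TYPE('a::field) 2 = 1 \<and> B TYPE('a) 3 = 2 \<and> B TYPE('a) 4 = 4 \<and> B TYPE('a) 5 = 6"
proof (intro conjI)
  note impossible = not_realizable[where 'a='a]
  show "B TYPE('a) 2 = 1" "B TYPE('a) 3 = 2"
    by (rule B_eqI; use impossible in \<open>simp del: One_nat_def\<close>)+
  show "B TYPE('a) 4 = 4"
  proof (rule B_eqI)
    show "realizable TYPE('a) 4 j" if "4 \<le> j" "j \<le> 4" for j
      using that realizable_4_4[where 'a='a] by (metis le_antisym)
  qed (use impossible in simp_all)
  show "B TYPE('a) 5 = 6"
  proof (rule B_eqI)
    show "realizable TYPE('a) 5 j" if "5 \<le> j" "j \<le> 6" for j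
    proof -
      have "j = 5 \<or> j = 6" using that by linarith
      then show ?thesis using realizable_5_5[where 'a='a] realizable_5_6[where 'a='a] by auto
    qed
  qed (use impossible in simp_all)
qed

end
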